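(* Let $G$ be a finite group and $K\trianglelefteq G$ a normal subgroup such that $\eta_g(K)=K$ for some $g\in G$. Then $K$ is inducible.
   Context: Commutators: $[x,y]=x^{-1}y^{-1}xy$, $x^y=y^{-1}xy$; for subsets $X,Y\subseteq G$, $[X,Y]$ is the subgroup generated by all $[x,y]$, and $[X,{}_kY]$ is the iterated commutator $[\cdots[[X,Y],Y]\cdots,Y]$ with $k$ copies of $Y$. $g^G=\{g^x:x\in G\}$. Fix $M\in\mathbb{N}$ with $[X,{}_MY]=[X,{}_iY]$ for all $i\ge M$ and all $X,Y\subseteq G$ with $X^G=X$, $Y^G=Y$; $\eta_g(K)=[K,{}_M\,g^G]$. An expression over $G$ is a word over $G\cup\mathcal{X}\cup\mathcal{X}^{-1}$ ($\mathcal{X}$ variables, $\mathcal{X}^{-1}$ formal inverses), evaluated under assignments $\sigma:\mathcal{X}\to G$ (with $\sigma(X^{-1})=\sigma(X)^{-1}$, $\sigma(g)=g$). A subset $S\subseteq G$ is inducible if there is an expression $\alpha$ with $S=\{\sigma(\alpha):\sigma:\mathcal{X}\to G\}$. *)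

theory Defs
  imports "HOL-Algebra.Algebra"
begin

definition commutator :: "('a, 'b) monoid_scheme \<Rightarrow> 'a \<Rightarrow> 'a \<Rightarrow> 'a" where
  "commutator G x y = inv\<^bsub>G\<^esub> x \<otimes>\<^bsub>G\<^esub> inv\<^bsub>G\<^esub> y \<otimes>\<^bsub>G\<^esub> x \<otimes>\<^bsub>G\<^esub> y"

definition conj_elem :: "('a, 'b) monoid_scheme \<Rightarrow> 'a \<Rightarrow> 'a \<Rightarrow> 'a" where
  "conj_elem G x y = inv\<^bsub>G\<^esub> y \<otimes>\<^bsub>G\<^esub> x \<otimes>\<^bsub>G\<^esub> y"

definition comm_set :: "('a, 'b) monoid_scheme \<Rightarrow> 'a set \<Rightarrow> 'a set \<Rightarrow> 'a set" where
  "comm_set G A B = generate G {commutator G x y | x y. x \<in> A \<and> y \<in> B}"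

fun iter_comm :: "('a, 'b) monoid_scheme \<Rightarrow> 'a set \<Rightarrow> nat \<Rightarrow> 'a set \<Rightarrow> 'a set" where
  "iter_comm G A 0 B = A"
| "iter_comm G A (Suc k) B = comm_set G (iter_comm G A k B) B"

definition conj_closure :: "('a, 'b) monoid_scheme \<Rightarrow> 'a set \<Rightarrow> 'a set" where
  "conj_closure G A = {conj_elem G x y | x y. x \<in> A \<and> y \<in> carrier G}"

definition conj_class :: "('a, 'b) monoid_scheme \<Rightarrow> 'a \<Rightarrow> 'a set" where
  "conj_class G g = {conj_elem G g y | y. y \<in> carrier G}"

definition stabilizing_bound :: "('a, 'b) monoid_scheme \<Rightarrow> nat \<Rightarrow> bool" where
  "stabilizing_bound G M \<longleftrightarrow>
     (\<forall>A B i. A \<subseteq> carrier G \<and> B \<subseteq> carrier G \<and> conj_closure G A = A \<and> conj_closure G B = B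
        \<and> i \<ge> M \<longrightarrow> iter_comm G A M B = iter_comm G A i B)"

definition eta :: "('a, 'b) monoid_scheme \<Rightarrow> nat \<Rightarrow> 'a \<Rightarrow> 'a set \<Rightarrow> 'a set" where
  "eta G M g K = iter_comm G K M (conj_class G g)"

datatype 'a letter = Const 'a | Var nat | InvVar nat

fun eval_letter :: "('a, 'b) monoid_scheme \<Rightarrow> (nat \<Rightarrow> 'a) \<Rightarrow> 'a letter \<Rightarrow> 'a" where
  "eval_letter G \<sigma> (Const g) = g"
| "eval_letter G \<sigma> (Var n) = \<sigma> n"
| "eval_letter G \<sigma> (InvVar n) = inv\<^bsub>G\<^esub> (\<sigma> n)"

fun eval_expr :: "('a, 'b) monoid_scheme \<Rightarrow> (nat \<Rightarrow> 'a) \<Rightarrow> 'a letter list \<Rightarrow> 'a" where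
  "eval_expr G \<sigma> [] = \<one>\<^bsub>G\<^esub>"
| "eval_expr G \<sigma> (l # w) = eval_letter G \<sigma> l \<otimes>\<^bsub>G\<^esub> eval_expr G \<sigma> w"

definition is_expr :: "('a, 'b) monoid_scheme \<Rightarrow> 'a letter list \<Rightarrow> bool" where
  "is_expr G \<alpha> \<longleftrightarrow> (\<forall>g. Const g \<in> set \<alpha> \<longrightarrow> g \<in> carrier G)"

definition inducible :: "('a, 'b) monoid_scheme \<Rightarrow> 'a set \<Rightarrow> bool" where
  "inducible G S \<longleftrightarrow> (\<exists>\<alpha>. is_expr G \<alpha> \<and>
      S = {eval_expr G \<sigma> \<alpha> | \<sigma>. \<sigma> \<in> UNIV \<rightarrow> carrier G})"

end

theory Submission
  imports Defs
begin

text \<open>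
  If \<open>\<eta>\<^sub>g(K) = K\<close> then \<open>K \<subseteq> [K, G]\<close>: for \<open>M > 0\<close> because \<open>\<eta>\<^sub>g(K)\<close> is generated by
  commutators of elements of \<open>K\<close> with elements of \<open>G\<close>, and for \<open>M = 0\<close> because the stabilizing
  bound forces \<open>K = [K, G]\<close>. Normality gives the reverse inclusion, so \<open>K = [K, G]\<close>.
  In a finite group \<open>[A, G]\<close> is inducible for every \<open>A = {a\<^sub>1, \<dots>, a\<^sub>k}\<close>: the value sets \<open>V\<^sub>n\<close>
  of the expression \<open>([a\<^sub>1, x\<^sub>1] \<cdots> [a\<^sub>k, x\<^sub>k])\<^sup>n\<close> (fresh variables in each factor) increase
  with \<open>n\<close> because \<open>[a, 1] = 1\<close>, so they stabilise; the stable set contains \<open>1\<close> and is closed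
  under left multiplication by the generators \<open>[a\<^sub>i, y]\<close>, so it contains \<open>[A, G]\<close>.
\<close>

fun commutator_expr :: "('a, 'b) monoid_scheme \<Rightarrow> nat \<Rightarrow> 'a list \<Rightarrow> 'a letter list" where
  "commutator_expr G i [] = []"
| "commutator_expr G i (b # bs) =
     [Const (inv\<^bsub>G\<^esub> b), InvVar i, Const b, Var i] @ commutator_expr G (Suc i) bs"

fun commutator_products :: "('a, 'b) monoid_scheme \<Rightarrow> 'a list \<Rightarrow> 'a set" where
  "commutator_products G [] = {\<one>\<^bsub>G\<^esub>}"
| "commutator_products G (b # bs) =
     {commutator G b y \<otimes>\<^bsub>G\<^esub> v | y v. y \<in> carrier G \<and> v \<in> commutator_products G bs}"

lemma finite_chain_stabilizes:
  assumes "finite S" and "\<And>n. V n \<subseteq> S" and "\<And>n. V n \<subseteq> V (Suc n)"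
  shows "\<exists>n. V (Suc n) = V n"
proof (rule ccontr)
  assume "\<not> ?thesis"
  with assms(3) have strict: "V n \<subset> V (Suc n)" for n
    by blast
  have "n \<le> card (V n)" for n
  proof (induction n)
    case (Suc n)
    have "card (V n) < card (V (Suc n))"
      using strict assms(1,2) by (meson finite_subset psubset_card_mono)
    with Suc show ?case
      by simp
  qed simp
  moreover have "card (V (Suc (card S))) \<le> card S"
    using assms(1,2) by (rule card_mono)
  ultimately show False
    by (metis not_less_eq_eq)
qed

context group
begin

lemma commutator_closed [simp]:
  "x \<in> carrier G \<Longrightarrow> y \<in> carrier G \<Longrightarrow> commutator G x y \<in> carrier G"
  by (simp add: commutator_def)

lemma commutator_one_right [simp]: "x \<in> carrier G \<Longrightarrow> commutator G x \<one> = \<one>"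
  by (simp add: commutator_def)

lemma finite_submonoid_is_subgroup:
  assumes "finite (carrier G)" and "H \<subseteq> carrier G" and "\<one> \<in> H"
    and mult: "\<And>x y. x \<in> H \<Longrightarrow> y \<in> H \<Longrightarrow> x \<otimes> y \<in> H"
  shows "subgroup H G"
proof (rule subgroupI)
  fix x assume x: "x \<in> H"
  then have x_carrier: "x \<in> carrier G"
    using assms(2) by blast
  have pow: "x [^] n \<in> H" for n :: nat
    by (induction n) (simp_all add: assms(3) mult x)
  have "0 < order G"
    using assms(1) by (simp add: order_gt_0_iff_finite)
  then have "x [^] (order G - 1) \<otimes> x = x [^] order G"
    by (metis Suc_diff_1 nat_pow_Suc)
  also have "\<dots> = \<one>"
    using x_carrier by (rule pow_order_eq_1)
  finally have "inv x = x [^] (order G - 1)"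
    using x_carrier by (simp add: inv_equality)
  then show "inv x \<in> H"
    using pow by simp
qed (use assms in auto)

lemma generate_subset_if_left_mult_closed:
  assumes "finite (carrier G)" and "S \<subseteq> carrier G" and "V \<subseteq> carrier G" and "\<one> \<in> V"
    and closed: "\<And>s v. s \<in> S \<Longrightarrow> v \<in> V \<Longrightarrow> s \<otimes> v \<in> V"
  shows "generate G S \<subseteq> V"
proof -
  define L where "L = {x \<in> carrier G. \<forall>v \<in> V. x \<otimes> v \<in> V}"
  have "subgroup L G"
  proof (rule finite_submonoid_is_subgroup)
    show "\<one> \<in> L"
      using assms(3) by (auto simp: L_def)
    show "x \<otimes> y \<in> L" if "x \<in> L" and "y \<in> L" for x y
      using that assms(3) by (auto simp: L_def m_assoc subset_iff)
  qed (auto simp: L_def assms(1))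
  moreover have "S \<subseteq> L"
    using assms(2) closed by (auto simp: L_def)
  ultimately have generate_L: "generate G S \<subseteq> L"
    by (rule generate_subgroup_incl[rotated])
  show ?thesis
  proof
    fix x assume "x \<in> generate G S"
    with generate_L have "x \<in> carrier G" and "x \<otimes> \<one> \<in> V"
      using assms(4) by (auto simp: L_def)
    then show "x \<in> V"
      by simp
  qed
qed

lemma commutator_products_closed:
  "set bs \<subseteq> carrier G \<Longrightarrow> commutator_products G bs \<subseteq> carrier G"
  by (induction bs) auto

lemma commutator_products_ConsI:
  "y \<in> carrier G \<Longrightarrow> v \<in> commutator_products G bs \<Longrightarrow>
    commutator G b y \<otimes> v \<in> commutator_products G (b # bs)"
  by auto

lemma one_in_commutator_products:
  "set bs \<subseteq> carrier G \<Longrightarrow> \<one> \<in> commutator_products G bs"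
  by (induction bs) (auto intro!: exI[of _ \<one>])

lemma commutator_in_commutator_products:
  assumes "set bs \<subseteq> carrier G" and "b \<in> set bs" and "y \<in> carrier G"
  shows "commutator G b y \<in> commutator_products G bs"
  using assms
proof (induction bs)
  case (Cons c bs)
  have b: "b \<in> carrier G" and c: "c \<in> carrier G"
    using Cons.prems by auto
  show ?case
  proof (cases "b = c")
    case True
    have "commutator G c y \<otimes> \<one> \<in> commutator_products G (c # bs)"
      using Cons.prems by (intro commutator_products_ConsI one_in_commutator_products) auto
    with True b Cons.prems(3) show ?thesis
      by simp
  next
    case False
    then have "commutator G c \<one> \<otimes> commutator G b y \<in> commutator_products G (c # bs)"
      using Cons by (intro commutator_products_ConsI) auto
    with b c Cons.prems(3) show ?thesis
      by simp
  qed
qed simp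

lemma commutator_products_append:
  assumes "set xs \<subseteq> carrier G" and "set ys \<subseteq> carrier G"
    and "x \<in> commutator_products G xs" and "v \<in> commutator_products G ys"
  shows "x \<otimes> v \<in> commutator_products G (xs @ ys)"
  using assms
proof (induction xs arbitrary: x)
  case Nil
  then have "v \<in> carrier G"
    using commutator_products_closed by blast
  with Nil show ?case
    by simp
next
  case (Cons c xs)
  then obtain y w where y: "y \<in> carrier G" and w: "w \<in> commutator_products G xs"
    and x: "x = commutator G c y \<otimes> w"
    by auto
  have "w \<otimes> v \<in> commutator_products G (xs @ ys)"
    using Cons w by simp
  moreover have "w \<in> carrier G" and "v \<in> carrier G"
    using Cons.prems w commutator_products_closed by auto
  then have "x \<otimes> v = commutator G c y \<otimes> (w \<otimes> v)"
    using Cons.prems(1) y by (simp add: x m_assoc)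
  ultimately show ?case
    unfolding append_Cons by (metis commutator_products_ConsI y)
qed

lemma commutator_products_subset_comm_set:
  "set bs \<subseteq> A \<Longrightarrow> commutator_products G bs \<subseteq> comm_set G A (carrier G)"
proof (induction bs)
  case (Cons b bs)
  have "commutator G b y \<in> comm_set G A (carrier G)" if "y \<in> carrier G" for y
    using Cons.prems that by (auto simp: comm_set_def intro: generate.incl)
  with Cons show ?case
    by (auto simp: comm_set_def intro: generate.eng)
qed (simp add: comm_set_def generate.one)

lemma eval_commutator_expr_cong:
  "(\<And>n. i \<le> n \<Longrightarrow> \<sigma> n = \<tau> n) \<Longrightarrow>
    eval_expr G \<sigma> (commutator_expr G i bs) = eval_expr G \<tau> (commutator_expr G i bs)"
  by (induction bs arbitrary: i) simp_all

lemma eval_commutator_expr_closed: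
  "set bs \<subseteq> carrier G \<Longrightarrow> \<sigma> \<in> UNIV \<rightarrow> carrier G \<Longrightarrow>
    eval_expr G \<sigma> (commutator_expr G i bs) \<in> carrier G"
  by (induction bs arbitrary: i) (auto simp: Pi_def)

lemma eval_commutator_expr_Cons:
  assumes "set (b # bs) \<subseteq> carrier G" and "\<sigma> \<in> UNIV \<rightarrow> carrier G"
  shows "eval_expr G \<sigma> (commutator_expr G i (b # bs)) =
    commutator G b (\<sigma> i) \<otimes> eval_expr G \<sigma> (commutator_expr G (Suc i) bs)"
proof -
  have "b \<in> carrier G" and "\<sigma> i \<in> carrier G"
    and "eval_expr G \<sigma> (commutator_expr G (Suc i) bs) \<in> carrier G"
    using assms eval_commutator_expr_closed[of bs \<sigma> "Suc i"] by auto
  then show ?thesis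
    by (simp add: commutator_def m_assoc)
qed

lemma values_commutator_expr:
  "set bs \<subseteq> carrier G \<Longrightarrow>
    {eval_expr G \<sigma> (commutator_expr G i bs) | \<sigma>. \<sigma> \<in> UNIV \<rightarrow> carrier G} = commutator_products G bs"
proof (induction bs arbitrary: i)
  case (Cons b bs)
  have IH: "v \<in> commutator_products G bs \<longleftrightarrow>
      (\<exists>\<sigma>. v = eval_expr G \<sigma> (commutator_expr G (Suc i) bs) \<and> \<sigma> \<in> UNIV \<rightarrow> carrier G)" for v
    using Cons by (simp add: set_eq_iff)
  show ?case
  proof (intro equalityI subsetI)
    fix w assume "w \<in> {eval_expr G \<sigma> (commutator_expr G i (b # bs)) | \<sigma>. \<sigma> \<in> UNIV \<rightarrow> carrier G}"
    then obtain \<sigma> where \<sigma>: "\<sigma> \<in> UNIV \<rightarrow> carrier G"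
      and w: "w = eval_expr G \<sigma> (commutator_expr G i (b # bs))"
      by blast
    then show "w \<in> commutator_products G (b # bs)"
      using Cons.prems IH eval_commutator_expr_Cons by fastforce
  next
    fix w assume "w \<in> commutator_products G (b # bs)"
    then obtain y \<sigma> where y: "y \<in> carrier G" and \<sigma>: "\<sigma> \<in> UNIV \<rightarrow> carrier G"
      and w: "w = commutator G b y \<otimes> eval_expr G \<sigma> (commutator_expr G (Suc i) bs)"
      using IH by auto
    define \<tau> where "\<tau> = \<sigma>(i := y)"
    have \<tau>: "\<tau> \<in> UNIV \<rightarrow> carrier G"
      using \<sigma> y by (auto simp: \<tau>_def)
    have "eval_expr G \<tau> (commutator_expr G (Suc i) bs) = eval_expr G \<sigma> (commutator_expr G (Suc i) bs)"
      by (rule eval_commutator_expr_cong) (simp add: \<tau>_def)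
    then have "w = eval_expr G \<tau> (commutator_expr G i (b # bs))"
      unfolding eval_commutator_expr_Cons[OF Cons.prems \<tau>] by (simp add: w \<tau>_def)
    with \<tau> show "w \<in> {eval_expr G \<sigma> (commutator_expr G i (b # bs)) | \<sigma>. \<sigma> \<in> UNIV \<rightarrow> carrier G}"
      by blast
  qed
qed auto

lemma is_expr_commutator_expr: "set bs \<subseteq> carrier G \<Longrightarrow> is_expr G (commutator_expr G i bs)"
  by (induction bs arbitrary: i) (auto simp: is_expr_def)

lemma inducible_commutator_products:
  "set bs \<subseteq> carrier G \<Longrightarrow> inducible G (commutator_products G bs)"
  unfolding inducible_def
  using is_expr_commutator_expr values_commutator_expr[symmetric] by blast

theorem comm_set_carrier_eq_commutator_products:
  assumes "finite (carrier G)" and bs: "set bs \<subseteq> carrier G"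
  shows "\<exists>n. comm_set G (set bs) (carrier G) = commutator_products G (concat (replicate n bs))"
proof -
  define V where "V n = commutator_products G (concat (replicate n bs))" for n
  have reps: "set (concat (replicate n bs)) \<subseteq> carrier G" for n
    using bs by auto
  have V_carrier: "V n \<subseteq> carrier G" for n
    unfolding V_def using reps by (rule commutator_products_closed)
  have V_comm_set: "V n \<subseteq> comm_set G (set bs) (carrier G)" for n
    unfolding V_def by (rule commutator_products_subset_comm_set) auto
  have V_step: "x \<otimes> v \<in> V (Suc n)" if "x \<in> commutator_products G bs" and "v \<in> V n" for x v n
    using commutator_products_append[OF bs reps that[unfolded V_def]] by (simp add: V_def)
  have V_one: "\<one> \<in> V n" for n
    unfolding V_def using reps by (rule one_in_commutator_products)
  have "V n \<subseteq> V (Suc n)" for n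
  proof
    fix v assume v: "v \<in> V n"
    then have "\<one> \<otimes> v \<in> V (Suc n)"
      using V_step one_in_commutator_products[OF bs] by blast
    moreover have "v \<in> carrier G"
      using V_carrier v by blast
    ultimately show "v \<in> V (Suc n)"
      by simp
  qed
  then obtain n where stable: "V (Suc n) = V n"
    using finite_chain_stabilizes[OF assms(1) V_carrier] by blast
  have "comm_set G (set bs) (carrier G) \<subseteq> V n"
    unfolding comm_set_def
  proof (rule generate_subset_if_left_mult_closed)
    show "{commutator G x y | x y. x \<in> set bs \<and> y \<in> carrier G} \<subseteq> carrier G"
      using bs by auto
    show "s \<otimes> v \<in> V n" if "s \<in> {commutator G x y | x y. x \<in> set bs \<and> y \<in> carrier G}"
      and "v \<in> V n" for s v
      using that V_step stable commutator_in_commutator_products[OF bs] by blast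
  qed (use assms(1) V_carrier V_one in auto)
  with V_comm_set show ?thesis
    unfolding V_def by blast
qed

corollary inducible_comm_set_carrier:
  assumes "finite (carrier G)" and "A \<subseteq> carrier G"
  shows "inducible G (comm_set G A (carrier G))"
proof -
  obtain bs where bs: "set bs = A"
    using assms finite_list finite_subset by metis
  then obtain n where "comm_set G A (carrier G) = commutator_products G (concat (replicate n bs))"
    using comm_set_carrier_eq_commutator_products assms by blast
  moreover have "set (concat (replicate n bs)) \<subseteq> carrier G"
    using assms(2) bs by auto
  ultimately show ?thesis
    using inducible_commutator_products by simp
qed

lemma commutator_mem_normal:
  assumes "K \<lhd> G" and "x \<in> K" and "y \<in> carrier G"
  shows "commutator G x y \<in> K"
proof -
  interpret K: normal K G by fact
  have "x \<in> carrier G"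
    using assms(2) K.subset by blast
  moreover have "inv x \<otimes> (inv y \<otimes> x \<otimes> y) \<in> K"
    using assms(2,3) by (simp add: K.inv_op_closed1 K.m_closed K.m_inv_closed)
  ultimately show ?thesis
    using assms(3) by (simp add: commutator_def m_assoc)
qed

lemma comm_set_subset_normal:
  assumes "K \<lhd> G" and "A \<subseteq> K" and "B \<subseteq> carrier G"
  shows "comm_set G A B \<subseteq> K"
  unfolding comm_set_def
proof (rule generate_subgroup_incl)
  show "{commutator G x y | x y. x \<in> A \<and> y \<in> B} \<subseteq> K"
    using assms commutator_mem_normal by blast
  show "subgroup K G"
    using assms(1) by (rule normal_imp_subgroup)
qed

lemma iter_comm_subset_normal:
  "K \<lhd> G \<Longrightarrow> B \<subseteq> carrier G \<Longrightarrow> iter_comm G K k B \<subseteq> K"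
  by (induction k) (simp_all add: comm_set_subset_normal)

lemma conj_closure_normal:
  assumes "K \<lhd> G"
  shows "conj_closure G K = K"
proof -
  interpret K: normal K G by fact
  have "conj_elem G x y \<in> K" if "x \<in> K" and "y \<in> carrier G" for x y
    using K.inv_op_closed1 that by (simp add: conj_elem_def)
  moreover have "x = conj_elem G x \<one>" if "x \<in> K" for x
    using that K.subset by (auto simp: conj_elem_def)
  ultimately show ?thesis
    unfolding conj_closure_def by blast
qed

lemma conj_class_closed: "g \<in> carrier G \<Longrightarrow> conj_class G g \<subseteq> carrier G"
  by (auto simp: conj_class_def conj_elem_def)

lemma comm_set_carrier_eq_if_eta_fixed:
  assumes "stabilizing_bound G M" and "K \<lhd> G" and "g \<in> carrier G" and "eta G M g K = K"
  shows "comm_set G K (carrier G) = K"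
proof
  show "comm_set G K (carrier G) \<subseteq> K"
    using assms(2) by (rule comm_set_subset_normal) auto
  show "K \<subseteq> comm_set G K (carrier G)"
  proof (cases M)
    case 0
    have "K \<subseteq> carrier G"
      using assms(2) normal_imp_subgroup subgroup.subset by blast
    then have "iter_comm G K 0 (carrier G) = iter_comm G K 1 (carrier G)"
      using assms(1) 0 conj_closure_normal[OF assms(2)] conj_closure_normal[OF normal_self]
      unfolding stabilizing_bound_def by blast
    then show ?thesis
      by simp
  next
    case (Suc m)
    have "K = comm_set G (iter_comm G K m (conj_class G g)) (conj_class G g)"
      using assms(4) Suc by (simp add: eta_def)
    also have "\<dots> \<subseteq> comm_set G K (carrier G)"
      unfolding comm_set_def
      using iter_comm_subset_normal[OF assms(2) conj_class_closed] conj_class_closed assms(3)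
      by (intro mono_generate) blast
    finally show ?thesis .
  qed
qed

end

theorem lemma4p2:
  fixes G (structure) and K :: "'a set" and M :: nat and g :: 'a
  assumes "group G" and "finite (carrier G)"
    and "stabilizing_bound G M"
    and "K \<lhd> G"
    and "g \<in> carrier G"
    and "eta G M g K = K"
  shows "inducible G K"
proof -
  interpret group G by fact
  have "K \<subseteq> carrier G"
    using assms(4) normal_imp_subgroup subgroup.subset by blast
  moreover have "comm_set G K (carrier G) = K"
    using assms(3-6) by (rule comm_set_carrier_eq_if_eta_fixed)
  ultimately show ?thesis
    using inducible_comm_set_carrier[OF assms(2)] by metis
qed

end
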